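(* Let $G$ be a connected graph and $v\in V(G)$. Let $G_v$ be the graph obtained from $G$ by adding a new vertex $v'$ adjacent to $v$ and to all vertices of $N_G(v)$. For a search tree $T$ on $G$, let $P(T)=\{T(i,j)\mid i\in\{0,\ldots,d_{T,v}\},\ j\in\{1,2\}\}$. Then $\{P(T)\mid T\in V(\mathcal{R}(G))\}$ is a partition of $V(\mathcal{R}(G_v))$.
   Context: For a connected graph $G$, a search tree on $G$ is a rooted tree with vertex set $V(G)$ defined recursively: its root is some vertex $r\in V(G)$, and the children of $r$ are the roots of search trees on the connected components of $G-r$. $V(\mathcal{R}(G))$ denotes the set of search trees on $G$. For a rooted tree $T$ with root $r_T$ and $w\in V(T)$, $d_{T,w}$ is the distance from $r_T$ to $w$. Insertion: for a rooted tree $T$, $v\in V(T)$ with $d=d_{T,v}$ and root-to-$v$ path $a_0,\ldots,a_d=v$, and $x\notin V(T)$: $T(0,x,v)$ has $x$ as new root with $T$ as its only subtree; for $1\le i\le d$, $T(i,x,v)$ is obtained by subdividing the edge $a_{i-1}a_i$ by $x$. Define $T(i,1)=T(i,v',v)$, and $T(i,2)=\rho^\ast(T(i,1))$, where $\rho$ is the permutation of $V(G_v)$ swapping $v$ and $v'$ and fixing all other vertices, and $\rho^\ast(R)$ is the rooted tree with edge set $\{\rho(a)\rho(b)\mid ab\in E(R)\}$ and root $\rho(r_R)$. *)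

theory Defs
  imports Main "HOL-Library.Disjoint_Sets" "HOL-Combinatorics.Transposition"
begin

definition graph :: "'a set \<Rightarrow> 'a set set \<Rightarrow> bool" where
  "graph V E \<longleftrightarrow> finite V \<and> (\<forall>e\<in>E. \<exists>a b. a \<in> V \<and> b \<in> V \<and> a \<noteq> b \<and> e = {a, b})"

definition reach :: "'a set \<Rightarrow> 'a set set \<Rightarrow> 'a \<Rightarrow> 'a \<Rightarrow> bool" where
  "reach V E x y \<longleftrightarrow> x \<in> V \<and> (\<lambda>a b. a \<in> V \<and> b \<in> V \<and> {a, b} \<in> E)\<^sup>*\<^sup>* x y"

definition connected_graph :: "'a set \<Rightarrow> 'a set set \<Rightarrow> bool" where
  "connected_graph V E \<longleftrightarrow> V \<noteq> {} \<and> (\<forall>x\<in>V. \<forall>y\<in>V. reach V E x y)"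

definition induced :: "'a set set \<Rightarrow> 'a set \<Rightarrow> 'a set set" where
  "induced E C = {e \<in> E. e \<subseteq> C}"

definition comps :: "'a set \<Rightarrow> 'a set set \<Rightarrow> 'a set set" where
  "comps V E = {{y \<in> V. reach V E x y} | x. x \<in> V}"

text \<open>Rooted trees are pairs (root, set of undirected edges).\<close>
type_synonym 'a rtree = "'a \<times> 'a set set"

inductive search_tree :: "'a set \<Rightarrow> 'a set set \<Rightarrow> 'a rtree \<Rightarrow> bool" where
  st: "connected_graph V E \<Longrightarrow> r \<in> V \<Longrightarrow>
   (\<forall>C\<in>comps (V - {r}) (induced E (V - {r})). search_tree C (induced E C) (t C)) \<Longrightarrow>
   F = (\<Union>C\<in>comps (V - {r}) (induced E (V - {r})). insert {r, fst (t C)} (snd (t C))) \<Longrightarrow>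
   search_tree V E (r, F)"

definition tree_path :: "'a set set \<Rightarrow> 'a list \<Rightarrow> bool" where
  "tree_path F p \<longleftrightarrow> p \<noteq> [] \<and> distinct p \<and> (\<forall>i. Suc i < length p \<longrightarrow> {p ! i, p ! Suc i} \<in> F)"

definition root_path :: "'a rtree \<Rightarrow> 'a \<Rightarrow> 'a list" where
  "root_path T w = (THE p. tree_path (snd T) p \<and> hd p = fst T \<and> last p = w)"

definition depth :: "'a rtree \<Rightarrow> 'a \<Rightarrow> nat" where
  "depth T w = length (root_path T w) - 1"

definition ins :: "'a rtree \<Rightarrow> nat \<Rightarrow> 'a \<Rightarrow> 'a \<Rightarrow> 'a rtree" where
  "ins T i x v =
    (if i = 0 then (x, insert {x, fst T} (snd T))
     else (let p = root_path T v in
       (fst T, (snd T - {{p ! (i - 1), p ! i}}) \<union> {{p ! (i - 1), x}, {x, p ! i}})))"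

definition relabel :: "('a \<Rightarrow> 'a) \<Rightarrow> 'a rtree \<Rightarrow> 'a rtree" where
  "relabel \<rho> R = (\<rho> (fst R), (\<lambda>e. \<rho> ` e) ` snd R)"

definition Gv_edges :: "'a set \<Rightarrow> 'a set set \<Rightarrow> 'a \<Rightarrow> 'a \<Rightarrow> 'a set set" where
  "Gv_edges V E v v' = E \<union> {{v', v}} \<union> {{v', u} | u. u \<in> V \<and> {v, u} \<in> E}"

definition Pset :: "'a rtree \<Rightarrow> 'a \<Rightarrow> 'a \<Rightarrow> 'a rtree set" where
  "Pset T v v' = {ins T i v' v | i. i \<le> depth T v}
              \<union> {relabel (transpose v v') (ins T i v' v) | i. i \<le> depth T v}"

end

theory Submission
  imports Defs
begin

text \<open>A search tree \<open>X\<close> of \<open>G\<^sub>v\<close> is classified by its root. If the root is \<open>v'\<close>,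
  deleting it leaves \<open>G\<close>, so \<open>X = T(0,1)\<close> for a unique search tree \<open>T\<close> of \<open>G\<close>. Since
  \<open>v\<close> and \<open>v'\<close> are adjacent twins, swapping them is an automorphism of \<open>G\<^sub>v\<close>; it reduces
  the case of root \<open>v\<close> to the previous one and yields \<open>X = T(0,2)\<close>. Otherwise the root \<open>r\<close>
  lies in \<open>V - {v}\<close>, and the components of \<open>G\<^sub>v - r\<close> are those of \<open>G - r\<close>, except that
  the component \<open>C\<close> containing \<open>v\<close> becomes \<open>C\<^sub>v\<close>. Inserting \<open>v'\<close> at depth \<open>i + 1\<close> of a
  search tree of \<open>G\<close> is the same as inserting it at depth \<open>i\<close> of its branch on \<open>C\<close>, so
  induction on \<open>|V|\<close> matches \<open>X\<close> with exactly one \<open>T(i,j)\<close>.\<close>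

section \<open>Reachability and connected components\<close>

abbreviation adj :: "'a set \<Rightarrow> 'a set set \<Rightarrow> 'a \<Rightarrow> 'a \<Rightarrow> bool" where
  "adj V E \<equiv> \<lambda>a b. a \<in> V \<and> b \<in> V \<and> {a, b} \<in> E"

lemma reach_imp_mem: "reach V E x y \<Longrightarrow> x \<in> V \<and> y \<in> V"
proof -
  assume "reach V E x y"
  hence "x \<in> V" and "(adj V E)\<^sup>*\<^sup>* x y" by (auto simp: reach_def)
  from this(2) have "y \<in> V" using \<open>x \<in> V\<close> by (induction rule: rtranclp_induct) auto
  with \<open>x \<in> V\<close> show ?thesis by simp
qed

lemma reach_refl: "x \<in> V \<Longrightarrow> reach V E x x"
  by (simp add: reach_def)

lemma reach_trans: "reach V E x y \<Longrightarrow> reach V E y z \<Longrightarrow> reach V E x z"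
  by (auto simp: reach_def)

lemma reach_sym: "reach V E x y \<Longrightarrow> reach V E y x"
proof -
  assume xy: "reach V E x y"
  have "symp (adj V E)" by (auto simp: symp_def insert_commute)
  hence "(adj V E)\<^sup>*\<^sup>* y x" using xy sympD[OF symp_rtranclp] by (auto simp: reach_def)
  thus ?thesis using reach_imp_mem[OF xy] by (simp add: reach_def)
qed

lemma reach_edge: "adj V E a b \<Longrightarrow> reach V E a b"
  by (auto simp: reach_def)

lemma rtranclp_map:
  assumes "R\<^sup>*\<^sup>* x y" and "\<And>a b. R a b \<Longrightarrow> R' (f a) (f b) \<or> f a = f b"
  shows "R'\<^sup>*\<^sup>* (f x) (f y)"
  using assms(1)
proof (induction rule: rtranclp_induct)
  case (step y z)
  then show ?case using assms(2)[OF step(2)] by (metis rtranclp.rtrancl_into_rtrancl)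
qed simp

lemma reach_map:
  assumes "reach V E x y" and "f x \<in> V'"
    and "\<And>a b. adj V E a b \<Longrightarrow> adj V' E' (f a) (f b) \<or> f a = f b"
  shows "reach V' E' (f x) (f y)"
proof -
  have "(adj V E)\<^sup>*\<^sup>* x y" using assms(1) by (simp add: reach_def)
  hence "(adj V' E')\<^sup>*\<^sup>* (f x) (f y)" using assms(3) by (rule rtranclp_map)
  thus ?thesis using assms(2) by (simp add: reach_def)
qed

lemma reach_mono: "reach V E x y \<Longrightarrow> V \<subseteq> V' \<Longrightarrow> E \<subseteq> E' \<Longrightarrow> reach V' E' x y"
  using reach_map[of V E x y id V' E'] reach_imp_mem[of V E x y] by auto

definition component :: "'a set \<Rightarrow> 'a set set \<Rightarrow> 'a \<Rightarrow> 'a set" where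
  "component V E x = {y \<in> V. reach V E x y}"

lemma comps_eq_image_component: "comps V E = component V E ` V"
  by (auto simp: comps_def component_def)

lemma component_eq_if_reach: "reach V E x y \<Longrightarrow> component V E x = component V E y"
  unfolding component_def by (metis reach_sym reach_trans)

lemma mem_component_self: "x \<in> V \<Longrightarrow> x \<in> component V E x"
  by (simp add: component_def reach_refl)

lemma mem_component_iff: "y \<in> component V E x \<longleftrightarrow> y \<in> V \<and> reach V E x y"
  by (simp add: component_def)

lemma component_subset: "component V E x \<subseteq> V"
  by (auto simp: component_def)

lemma comps_subset: "C \<in> comps V E \<Longrightarrow> C \<subseteq> V"
  by (auto simp: comps_eq_image_component component_def)

lemma comps_eq_component: "C \<in> comps V E \<Longrightarrow> x \<in> C \<Longrightarrow> C = component V E x"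
proof -
  assume "C \<in> comps V E" and x: "x \<in> C"
  then obtain a where "C = component V E a" by (auto simp: comps_eq_image_component)
  with x show ?thesis by (simp add: mem_component_iff component_eq_if_reach)
qed

lemma comps_eqI: "C \<in> comps V E \<Longrightarrow> D \<in> comps V E \<Longrightarrow> x \<in> C \<Longrightarrow> x \<in> D \<Longrightarrow> C = D"
  using comps_eq_component by metis

lemma ex_comps_mem: "x \<in> V \<Longrightarrow> \<exists>C\<in>comps V E. x \<in> C"
  using mem_component_self by (fastforce simp: comps_eq_image_component)

lemma comps_connected: "connected_graph V E \<Longrightarrow> comps V E = {V}"
proof -
  assume conn: "connected_graph V E"
  hence "component V E x = V" if "x \<in> V" for x
    using that component_subset unfolding connected_graph_def component_def by blast
  moreover have "V \<noteq> {}" using conn unfolding connected_graph_def by blast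
  ultimately show ?thesis unfolding comps_eq_image_component by auto
qed

lemma graph_edge_subset: "graph V E \<Longrightarrow> e \<in> E \<Longrightarrow> e \<subseteq> V"
  unfolding graph_def by fastforce

lemma graph_induced: "graph V E \<Longrightarrow> W \<subseteq> V \<Longrightarrow> graph W (induced E W)"
  unfolding graph_def induced_def by (metis finite_subset insert_subset mem_Collect_eq)

section \<open>Decomposing a search tree at its root\<close>

abbreviation comps_del :: "'a set \<Rightarrow> 'a set set \<Rightarrow> 'a \<Rightarrow> 'a set set" where
  "comps_del V E r \<equiv> comps (V - {r}) (induced E (V - {r}))"

abbreviation hang_edges :: "'a \<Rightarrow> 'a rtree \<Rightarrow> 'a set set" where
  "hang_edges r S \<equiv> insert {r, fst S} (snd S)"

lemma graph_comps_del: "graph V E \<Longrightarrow> C \<in> comps_del V E r \<Longrightarrow> graph C (induced E C)"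
  using graph_induced[of V E C] comps_subset[of C] by blast

lemma card_comps_del_less: "finite V \<Longrightarrow> r \<in> V \<Longrightarrow> C \<in> comps_del V E r \<Longrightarrow> card C < card V"
  using comps_subset[of C] by (intro psubset_card_mono) auto

definition decomp :: "'a set \<Rightarrow> 'a set set \<Rightarrow> 'a \<Rightarrow> 'a set set \<Rightarrow> ('a set \<Rightarrow> 'a rtree) \<Rightarrow> bool" where
  "decomp V E r F t \<longleftrightarrow> connected_graph V E \<and> r \<in> V \<and>
    (\<forall>C\<in>comps_del V E r. search_tree C (induced E C) (t C)) \<and>
    F = (\<Union>C\<in>comps_del V E r. hang_edges r (t C))"

lemma search_tree_iff_decomp: "search_tree V E (r, F) \<longleftrightarrow> (\<exists>t. decomp V E r F t)"
proof
  assume "search_tree V E (r, F)"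
  then show "\<exists>t. decomp V E r F t" by (cases rule: search_tree.cases) (auto simp: decomp_def)
next
  assume "\<exists>t. decomp V E r F t"
  then show "search_tree V E (r, F)" unfolding decomp_def by (blast intro: search_tree.st)
qed

lemma search_tree_connected: "search_tree V E T \<Longrightarrow> connected_graph V E"
  by (cases rule: search_tree.cases) auto

definition rtree_on :: "'a set \<Rightarrow> 'a rtree \<Rightarrow> bool" where
  "rtree_on V T \<longleftrightarrow> fst T \<in> V \<and> (\<forall>e\<in>snd T. \<exists>a b. e = {a, b} \<and> a \<noteq> b \<and> a \<in> V \<and> b \<in> V)"

lemma search_tree_rtree_on: "search_tree V E T \<Longrightarrow> rtree_on V T"
proof (induction rule: search_tree.induct)
  case (st V E r t F)
  have "\<exists>a b. e = {a, b} \<and> a \<noteq> b \<and> a \<in> V \<and> b \<in> V"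
    if C: "C \<in> comps_del V E r" and e: "e \<in> hang_edges r (t C)" for C e
  proof -
    have tC: "rtree_on C (t C)" using st.IH C by blast
    have CV: "C \<subseteq> V - {r}" using comps_subset[OF C] .
    show ?thesis
    proof (cases "e = {r, fst (t C)}")
      case True
      thus ?thesis using tC CV \<open>r \<in> V\<close> unfolding rtree_on_def by blast
    next
      case False
      hence "e \<in> snd (t C)" using e by simp
      then obtain a b where "e = {a, b}" "a \<noteq> b" "a \<in> C" "b \<in> C"
        using tC unfolding rtree_on_def by blast
      thus ?thesis using CV by blast
    qed
  qed
  thus ?case using \<open>r \<in> V\<close> \<open>F = _\<close> unfolding rtree_on_def by auto
qed

lemma rtree_on_edge_subset: "rtree_on V T \<Longrightarrow> e \<in> snd T \<Longrightarrow> e \<subseteq> V"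
  unfolding rtree_on_def by fastforce

lemma rtree_on_edge_nonempty: "rtree_on V T \<Longrightarrow> e \<in> snd T \<Longrightarrow> e \<noteq> {}"
  unfolding rtree_on_def by fastforce

context
  fixes V E r F t
  assumes dc: "decomp V E r F t"
begin

lemma decomp_search_tree: "C \<in> comps_del V E r \<Longrightarrow> search_tree C (induced E C) (t C)"
  using dc unfolding decomp_def by blast

lemma decomp_rtree_on: "C \<in> comps_del V E r \<Longrightarrow> rtree_on C (t C)"
  using search_tree_rtree_on decomp_search_tree by blast

lemma decomp_root_mem: "C \<in> comps_del V E r \<Longrightarrow> fst (t C) \<in> C"
  using decomp_rtree_on by (simp add: rtree_on_def)

lemma decomp_edge_subset: "C \<in> comps_del V E r \<Longrightarrow> e \<in> snd (t C) \<Longrightarrow> e \<subseteq> C"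
  using decomp_rtree_on rtree_on_edge_subset by blast

lemma decomp_hang_edges_subset: "C \<in> comps_del V E r \<Longrightarrow> hang_edges r (t C) \<subseteq> F"
  using dc unfolding decomp_def by blast

lemma decomp_root_edge:
  assumes "e \<in> F" and "r \<in> e"
  obtains C where "C \<in> comps_del V E r" and "e = {r, fst (t C)}"
proof -
  obtain C where C: "C \<in> comps_del V E r" and e: "e \<in> hang_edges r (t C)"
    using dc assms(1) unfolding decomp_def by blast
  have "e \<notin> snd (t C)" using decomp_edge_subset[OF C] comps_subset[OF C] assms(2) by blast
  thus thesis using that C e by blast
qed

lemma decomp_nonroot_edge:
  assumes "e \<in> F" and "r \<notin> e"
  obtains C where "C \<in> comps_del V E r" and "e \<in> snd (t C)"
  using dc assms unfolding decomp_def by blast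

end

section \<open>Root paths\<close>

lemma tree_path_Cons:
  "tree_path F (a # p) \<longleftrightarrow> a \<notin> set p \<and> (p = [] \<or> {a, hd p} \<in> F \<and> tree_path F p)"
proof (cases p)
  case (Cons b q)
  have "(\<forall>i. Suc i < length (a # p) \<longrightarrow> {(a # p) ! i, (a # p) ! Suc i} \<in> F) \<longleftrightarrow>
      {a, b} \<in> F \<and> (\<forall>i. Suc i < length p \<longrightarrow> {p ! i, p ! Suc i} \<in> F)"
    using Cons by (simp add: All_less_Suc2)
  thus ?thesis using Cons by (auto simp: tree_path_def)
qed (simp add: tree_path_def)

lemma tree_path_mono: "tree_path F p \<Longrightarrow> F \<subseteq> F' \<Longrightarrow> tree_path F' p"
  unfolding tree_path_def by blast

lemma tree_path_subset:
  "tree_path F p \<Longrightarrow> (\<And>e. e \<in> F \<Longrightarrow> e \<subseteq> C) \<Longrightarrow> hd p \<in> C \<Longrightarrow> set p \<subseteq> C"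
proof (induction p)
  case (Cons a q)
  show ?case
  proof (cases q)
    case (Cons b q')
    hence "{a, hd q} \<in> F" and "tree_path F q" using Cons.prems(1) by (auto simp: tree_path_Cons)
    thus ?thesis using Cons.IH Cons.prems by auto
  qed (use Cons.prems in simp)
qed (simp add: tree_path_def)

definition root_paths :: "'a rtree \<Rightarrow> 'a \<Rightarrow> 'a list set" where
  "root_paths T w = {p. tree_path (snd T) p \<and> hd p = fst T \<and> last p = w}"

lemma root_paths_root: "root_paths (r, F) r = {[r]}"
proof -
  have "p = [r]" if p: "tree_path F p" "hd p = r" "last p = r" for p
  proof -
    obtain q where q: "p = r # q" using p(1,2) by (cases p) (auto simp: tree_path_def)
    hence "r \<notin> set q" using p(1) by (simp add: tree_path_Cons)
    thus "p = [r]" using q p(3) last_in_set[of q] by (cases "q = []") auto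
  qed
  thus ?thesis by (auto simp: root_paths_def tree_path_def)
qed

lemma decomp_tree_path_branch:
  assumes dc: "decomp V E r F t" and C: "C \<in> comps_del V E r"
  shows "tree_path F p \<Longrightarrow> r \<notin> set p \<Longrightarrow> hd p \<in> C \<Longrightarrow> tree_path (snd (t C)) p \<and> set p \<subseteq> C"
proof (induction p)
  case (Cons a q)
  note prems = Cons.prems
  show ?case
  proof (cases "q = []")
    case True
    thus ?thesis using prems by (simp add: tree_path_def)
  next
    case False
    have ab: "{a, hd q} \<in> F" "r \<notin> {a, hd q}" and q: "tree_path F q" "a \<notin> set q" "r \<notin> set q"
      using False prems(1,2) hd_in_set[OF False] by (auto simp: tree_path_Cons)
    obtain D where D: "D \<in> comps_del V E r" "{a, hd q} \<in> snd (t D)"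
      using decomp_nonroot_edge[OF dc ab] .
    have sub: "{a, hd q} \<subseteq> D" using decomp_edge_subset[OF dc D] .
    hence "D = C" using comps_eqI[OF D(1) C] prems(3) by auto
    hence edge: "hd q \<in> C" "{a, hd q} \<in> snd (t C)" using D sub by auto
    with Cons.IH q have "tree_path (snd (t C)) q" "set q \<subseteq> C" by auto
    thus ?thesis using edge q(2) False prems(3) by (simp add: tree_path_Cons)
  qed
qed (simp add: tree_path_def)

lemma root_paths_child:
  assumes dc: "decomp V E r F t" and C0: "C0 \<in> comps_del V E r" and w: "w \<in> C0"
  shows "root_paths (r, F) w = (#) r ` root_paths (t C0) w"
proof (intro equalityI subsetI)
  fix p assume "p \<in> root_paths (r, F) w"
  hence p: "tree_path F p" "hd p = r" "last p = w" by (auto simp: root_paths_def)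
  have "w \<noteq> r" using comps_subset[OF C0] w by blast
  obtain p0 where "p = r # p0" using p(1,2) by (cases p) (auto simp: tree_path_def)
  with \<open>w \<noteq> r\<close> p(3) have p0: "p = r # p0" "p0 \<noteq> []" by auto
  hence p0F: "tree_path F p0" "r \<notin> set p0" "{r, hd p0} \<in> F"
    using p(1) by (auto simp: tree_path_Cons)
  obtain C1 where C1: "C1 \<in> comps_del V E r" "{r, hd p0} = {r, fst (t C1)}"
    using decomp_root_edge[OF dc p0F(3)] by blast
  have "hd p0 = fst (t C1)" using C1(2) p0F(2) p0(2) by (auto simp: doubleton_eq_iff)
  hence path: "tree_path (snd (t C1)) p0" and "set p0 \<subseteq> C1"
    using decomp_tree_path_branch[OF dc C1(1) p0F(1,2)] decomp_root_mem[OF dc C1(1)] by simp_all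
  moreover have "last p0 = w" using p(3) p0 by simp
  ultimately have "w \<in> C1" using last_in_set[OF p0(2)] by blast
  hence "C1 = C0" using comps_eqI[OF C1(1) C0 _ w] by blast
  thus "p \<in> (#) r ` root_paths (t C0) w"
    using p0(1) path \<open>hd p0 = fst (t C1)\<close> \<open>last p0 = w\<close> by (simp add: root_paths_def)
next
  fix p assume "p \<in> (#) r ` root_paths (t C0) w"
  then obtain p0 where p: "p = r # p0"
    and p0: "tree_path (snd (t C0)) p0" "hd p0 = fst (t C0)" "last p0 = w"
    by (auto simp: root_paths_def)
  have "p0 \<noteq> []" using p0(1) by (simp add: tree_path_def)
  have "set p0 \<subseteq> C0"
    using tree_path_subset[OF p0(1)] decomp_edge_subset[OF dc C0] decomp_root_mem[OF dc C0] p0(2)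
    by auto
  hence "r \<notin> set p0" using comps_subset[OF C0] by blast
  moreover have "tree_path F p0"
    using tree_path_mono[OF p0(1)] decomp_hang_edges_subset[OF dc C0] by blast
  moreover have "{r, hd p0} \<in> F" using decomp_hang_edges_subset[OF dc C0] p0(2) by auto
  ultimately have "tree_path F p" using p by (simp add: tree_path_Cons)
  thus "p \<in> root_paths (r, F) w" using p p0 \<open>p0 \<noteq> []\<close> by (simp add: root_paths_def)
qed

lemma root_paths_singleton: "search_tree V E T \<Longrightarrow> w \<in> V \<Longrightarrow> \<exists>p. root_paths T w = {p}"
proof (induction arbitrary: w rule: search_tree.induct)
  case (st V E r t F)
  have "\<forall>C\<in>comps_del V E r. search_tree C (induced E C) (t C)" using st.IH by blast
  hence dc: "decomp V E r F t" unfolding decomp_def by (intro conjI st.hyps)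
  show ?case
  proof (cases "w = r")
    case False
    then obtain C0 where C0: "C0 \<in> comps_del V E r" "w \<in> C0"
      using ex_comps_mem[of w "V - {r}" "induced E (V - {r})"] st.prems by blast
    then obtain p0 where "root_paths (t C0) w = {p0}" using st.IH by blast
    thus ?thesis by (simp add: root_paths_child[OF dc C0])
  next
    case True
    show ?thesis unfolding True root_paths_root by blast
  qed
qed

lemma root_path_eqI: "root_paths T w = {p} \<Longrightarrow> root_path T w = p"
proof -
  assume paths: "root_paths T w = {p}"
  have "root_path T w = (THE q. q \<in> root_paths T w)" by (simp add: root_path_def root_paths_def)
  thus ?thesis unfolding paths by simp
qed

lemma root_path_mem_root_paths: "search_tree V E T \<Longrightarrow> w \<in> V \<Longrightarrow> root_path T w \<in> root_paths T w"
  by (metis root_path_eqI root_paths_singleton singletonI)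

lemma root_path_root: "root_path (r, F) r = [r]"
  using root_paths_root by (rule root_path_eqI)

lemma root_path_child:
  assumes dc: "decomp V E r F t" and C0: "C0 \<in> comps_del V E r" and w: "w \<in> C0"
  shows "root_path (r, F) w = r # root_path (t C0) w"
proof -
  obtain p0 where "root_paths (t C0) w = {p0}"
    using root_paths_singleton[OF decomp_search_tree[OF dc C0] w] by blast
  thus ?thesis using root_paths_child[OF dc C0 w] by (simp add: root_path_eqI)
qed

section \<open>Relabelling vertices\<close>

abbreviation map_edges :: "('a \<Rightarrow> 'b) \<Rightarrow> 'a set set \<Rightarrow> 'b set set" where
  "map_edges f E \<equiv> (\<lambda>e. f ` e) ` E"

lemma doubleton_mem_map_edges: "{a, b} \<in> E \<Longrightarrow> {f a, f b} \<in> map_edges f E"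
  by (metis image_empty image_insert rev_image_eqI)

lemma reach_map_edges_iff:
  assumes f: "inj f"
  shows "reach (f ` V) (map_edges f E) (f x) (f y) \<longleftrightarrow> reach V E x y"
proof
  assume xy: "reach V E x y"
  show "reach (f ` V) (map_edges f E) (f x) (f y)"
    by (rule reach_map[OF xy]) (use reach_imp_mem[OF xy] in \<open>auto intro: doubleton_mem_map_edges\<close>)
next
  assume fxy: "reach (f ` V) (map_edges f E) (f x) (f y)"
  have "reach V E (inv f (f x)) (inv f (f y))"
  proof (rule reach_map[OF fxy])
    show "inv f (f x) \<in> V" using reach_imp_mem[OF fxy] f by (auto simp: inj_image_mem_iff)
  next
    fix a b assume ab: "adj (f ` V) (map_edges f E) a b"
    then obtain a0 b0 e where "a = f a0" "b = f b0" "a0 \<in> V" "b0 \<in> V" "e \<in> E" "f ` {a0, b0} = f ` e"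
      by auto
    moreover have "{a0, b0} = e"
      using \<open>f ` {a0, b0} = f ` e\<close> inj_image_eq_iff[OF f, of "{a0, b0}" e] by simp
    ultimately show "adj V E (inv f a) (inv f b) \<or> inv f a = inv f b" using f by simp
  qed
  thus "reach V E x y" using f by simp
qed

lemma component_map_edges:
  "inj f \<Longrightarrow> component (f ` V) (map_edges f E) (f x) = f ` component V E x"
proof -
  assume f: "inj f"
  show ?thesis
  proof
    show "component (f ` V) (map_edges f E) (f x) \<subseteq> f ` component V E x"
      unfolding component_def using reach_map_edges_iff[OF f] by blast
    show "f ` component V E x \<subseteq> component (f ` V) (map_edges f E) (f x)"
      unfolding component_def using reach_map_edges_iff[OF f] by blast
  qed
qed

lemma comps_map_edges: "inj f \<Longrightarrow> comps (f ` V) (map_edges f E) = (`) f ` comps V E"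
  unfolding comps_eq_image_component by (simp add: image_image component_map_edges)

lemma induced_map_edges: "inj f \<Longrightarrow> induced (map_edges f E) (f ` W) = map_edges f (induced E W)"
  unfolding induced_def by (auto simp: inj_image_subset_iff)

lemma connected_graph_map_edges:
  "inj f \<Longrightarrow> connected_graph V E \<Longrightarrow> connected_graph (f ` V) (map_edges f E)"
  unfolding connected_graph_def by (auto simp: reach_map_edges_iff)

lemma search_tree_relabel:
  "search_tree V E T \<Longrightarrow> inj f \<Longrightarrow> search_tree (f ` V) (map_edges f E) (relabel f T)"
proof (induction rule: search_tree.induct)
  case (st V E r t F)
  note f = \<open>inj f\<close>
  define t' where "t' D = relabel f (t (f -` D))" for D
  have t': "t' (f ` C) = relabel f (t C)" for C using f by (simp add: t'_def inj_vimage_image_eq)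
  have W: "f ` V - {f r} = f ` (V - {r})" using f by (simp add: image_set_diff)
  have K: "comps_del (f ` V) (map_edges f E) (f r) = (`) f ` comps_del V E r"
    unfolding W induced_map_edges[OF f] comps_map_edges[OF f] ..
  show ?case unfolding relabel_def fst_conv snd_conv
  proof (rule search_tree.st[where t = t'])
    show "connected_graph (f ` V) (map_edges f E)"
      using connected_graph_map_edges[OF f st.hyps(1)] .
    show "f r \<in> f ` V" using st.hyps(2) by simp
    show "\<forall>D\<in>comps_del (f ` V) (map_edges f E) (f r).
        search_tree D (induced (map_edges f E) D) (t' D)"
      unfolding K
    proof
      fix D assume "D \<in> (`) f ` comps_del V E r"
      then obtain C where C: "C \<in> comps_del V E r" "D = f ` C" by blast
      have "search_tree (f ` C) (map_edges f (induced E C)) (relabel f (t C))"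
        using st.IH C(1) f by blast
      thus "search_tree D (induced (map_edges f E) D) (t' D)"
        using C(2) t' induced_map_edges[OF f] by simp
    qed
    show "map_edges f F = (\<Union>D\<in>comps_del (f ` V) (map_edges f E) (f r). hang_edges (f r) (t' D))"
      unfolding K st.hyps(3) by (simp add: image_UN t' relabel_def)
  qed
qed

lemma relabel_transpose_transpose [simp]: "relabel (transpose a b) (relabel (transpose a b) T) = T"
  by (simp add: relabel_def image_comp)

section \<open>The graph \<open>G\<^sub>v\<close>\<close>

lemma induced_Gv_edges_avoiding: "v' \<notin> C \<Longrightarrow> induced (Gv_edges V E v v') C = induced E C"
  unfolding induced_def Gv_edges_def by auto

lemma induced_Gv_edges_insert:
  assumes g: "graph V E" and W: "W \<subseteq> V" "v \<in> W" and v': "v' \<notin> V"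
  shows "induced (Gv_edges V E v v') (insert v' W) = Gv_edges W (induced E W) v v'"
proof -
  have "e \<subseteq> insert v' W \<longleftrightarrow> e \<subseteq> W" if "e \<in> E" for e
    using graph_edge_subset[OF g that] v' by blast
  thus ?thesis using W v' unfolding induced_def Gv_edges_def by auto
qed

lemma induced_Gv_edges_self: "graph V E \<Longrightarrow> v' \<notin> V \<Longrightarrow> induced (Gv_edges V E v v') V = E"
  using induced_Gv_edges_avoiding[of v' V V E v] graph_edge_subset[of V E]
    unfolding induced_def by blast

lemma Gv_edgesE:
  assumes "e \<in> Gv_edges V E v v'"
  obtains "e \<in> E" | "e = {v', v}" | u where "u \<in> V" "{v, u} \<in> E" "e = {v', u}"
  using assms unfolding Gv_edges_def by blast

context
  fixes V E v v'
  assumes g: "graph V E" and v: "v \<in> V" and v': "v' \<notin> V"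
begin

lemma reach_Gv_edges_iff:
  assumes xy: "x \<in> V" "y \<in> V"
  shows "reach (insert v' V) (Gv_edges V E v v') x y \<longleftrightarrow> reach V E x y"
proof
  assume "reach V E x y"
  thus "reach (insert v' V) (Gv_edges V E v v') x y"
    by (rule reach_mono) (auto simp: Gv_edges_def)
next
  assume xy': "reach (insert v' V) (Gv_edges V E v v') x y"
  define f where "f = id(v' := v)"
  have "reach V E (f x) (f y)"
  proof (rule reach_map[OF xy'])
    show "f x \<in> V" using xy v' by (auto simp: f_def)
  next
    fix a b assume ab: "adj (insert v' V) (Gv_edges V E v v') a b"
    show "adj V E (f a) (f b) \<or> f a = f b"
    proof (cases "a = v' \<or> b = v'")
      case False
      hence "{a, b} \<in> E" using ab by (auto elim: Gv_edgesE simp: doubleton_eq_iff)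
      thus ?thesis using False ab by (auto simp: f_def)
    next
      case True
      have "{a, b} \<notin> E" using True graph_edge_subset[OF g, of "{a, b}"] v' by blast
      with ab consider "{a, b} = {v', v}" | u where "u \<in> V" "{v, u} \<in> E" "{a, b} = {v', u}"
        by (auto elim: Gv_edgesE)
      thus ?thesis
      proof cases
        case (2 u)
        have "u \<noteq> v'" using 2 v' by blast
        thus ?thesis using 2 v v' by (auto simp: f_def doubleton_eq_iff insert_commute)
      qed (auto simp: f_def doubleton_eq_iff)
    qed
  qed
  moreover have "f x = x" "f y = y" using xy v' by (auto simp: f_def)
  ultimately show "reach V E x y" by simp
qed

lemma reach_Gv_edges_new_iff:
  assumes x: "x \<in> V"
  shows "reach (insert v' V) (Gv_edges V E v v') x v' \<longleftrightarrow> reach V E x v"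
proof -
  let ?R = "reach (insert v' V) (Gv_edges V E v v')"
  have "?R v v'" using v by (intro reach_edge) (auto simp: Gv_edges_def insert_commute)
  thus ?thesis using reach_trans reach_sym reach_Gv_edges_iff[OF x v] by metis
qed

lemma connected_graph_Gv_edges_iff:
  "connected_graph (insert v' V) (Gv_edges V E v v') \<longleftrightarrow> connected_graph V E"
proof
  assume "connected_graph (insert v' V) (Gv_edges V E v v')"
  thus "connected_graph V E" using v reach_Gv_edges_iff unfolding connected_graph_def by blast
next
  assume conn: "connected_graph V E"
  let ?R = "reach (insert v' V) (Gv_edges V E v v')"
  have old: "?R x y" if "x \<in> V" "y \<in> V" for x y
    using conn that reach_Gv_edges_iff unfolding connected_graph_def by blast
  have new: "?R x v'" if "x \<in> V" for x
    using conn that v reach_Gv_edges_new_iff unfolding connected_graph_def by blast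
  have "?R x y" if "x \<in> insert v' V" "y \<in> insert v' V" for x y
    using that old new reach_sym[OF new] reach_refl[of v' "insert v' V"] by blast
  thus "connected_graph (insert v' V) (Gv_edges V E v v')" unfolding connected_graph_def by blast
qed

lemma component_Gv_edges:
  assumes x: "x \<in> V"
  shows "component (insert v' V) (Gv_edges V E v v') x =
    (if reach V E x v then insert v' (component V E x) else component V E x)"
proof (rule set_eqI)
  fix y
  show "y \<in> component (insert v' V) (Gv_edges V E v v') x \<longleftrightarrow>
      y \<in> (if reach V E x v then insert v' (component V E x) else component V E x)"
  proof (cases "y = v'")
    case True
    thus ?thesis using reach_Gv_edges_new_iff[OF x] v' by (simp add: mem_component_iff)
  next
    case False
    thus ?thesis using reach_Gv_edges_iff[OF x] by (auto simp: mem_component_iff)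
  qed
qed

lemma comps_Gv_edges:
  "comps (insert v' V) (Gv_edges V E v v') =
    insert (insert v' (component V E v)) (comps V E - {component V E v})"
proof -
  let ?c = "component (insert v' V) (Gv_edges V E v v')"
  let ?C0 = "component V E v"
  have same: "component V E x = ?C0 \<longleftrightarrow> reach V E x v" if x: "x \<in> V" for x
  proof
    assume "component V E x = ?C0"
    hence "x \<in> ?C0" using mem_component_self[OF x, of E] by simp
    thus "reach V E x v" by (simp add: mem_component_iff reach_sym)
  qed (rule component_eq_if_reach)
  have cx: "?c x = (if reach V E x v then insert v' ?C0 else component V E x)" if "x \<in> V" for x
    using component_Gv_edges[OF that] same[OF that] by auto
  have "reach (insert v' V) (Gv_edges V E v v') v v'"
    using reach_Gv_edges_new_iff[OF v] reach_refl[OF v] by simp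
  hence "?c v' = ?c v" by (rule component_eq_if_reach[symmetric])
  hence "?c v' = insert v' ?C0" using cx[OF v] reach_refl[OF v] by simp
  hence "comps (insert v' V) (Gv_edges V E v v') = insert (insert v' ?C0) (?c ` V)"
    by (simp add: comps_eq_image_component)
  also have "?c ` V = (\<lambda>x. if reach V E x v then insert v' ?C0 else component V E x) ` V"
    by (rule image_cong[OF refl cx])
  also have "insert (insert v' ?C0) \<dots> =
      insert (insert v' ?C0) (component V E ` {x \<in> V. \<not> reach V E x v})"
    using v reach_refl[OF v] by (auto intro: rev_image_eqI)
  also have "component V E ` {x \<in> V. \<not> reach V E x v} = comps V E - {?C0}"
  proof
    show "component V E ` {x \<in> V. \<not> reach V E x v} \<subseteq> comps V E - {?C0}"
      using same by (auto simp: comps_eq_image_component)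
    show "comps V E - {?C0} \<subseteq> component V E ` {x \<in> V. \<not> reach V E x v}"
      using same by (auto simp: comps_eq_image_component)
  qed
  finally show ?thesis .
qed

lemma transpose_Gv_edges_subset:
  "map_edges (transpose v v') (Gv_edges V E v v') \<subseteq> Gv_edges V E v v'"
proof
  fix e' assume "e' \<in> map_edges (transpose v v') (Gv_edges V E v v')"
  then obtain e where e: "e \<in> Gv_edges V E v v'" "e' = transpose v v' ` e" by blast
  show "e' \<in> Gv_edges V E v v'"
    using e(1)
  proof (cases rule: Gv_edgesE)
    case 1
    then obtain a b where ab: "a \<in> V" "b \<in> V" "a \<noteq> b" "e = {a, b}"
      using g unfolding graph_def by blast
    have "a \<noteq> v'" "b \<noteq> v'" using ab v' by auto
    consider "a = v" | "b = v" | "a \<noteq> v" "b \<noteq> v" by blast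
    thus ?thesis
    proof cases
      case 1
      hence "e' = {v', b}" "{v, b} \<in> E" using e(2) ab \<open>b \<noteq> v'\<close> \<open>e \<in> E\<close> by auto
      thus ?thesis using ab unfolding Gv_edges_def by blast
    next
      case 2
      hence "e' = {v', a}" "{v, a} \<in> E"
        using e(2) ab \<open>a \<noteq> v'\<close> \<open>e \<in> E\<close> by (auto simp: insert_commute)
      thus ?thesis using ab unfolding Gv_edges_def by blast
    next
      case 3
      hence "e' = e" using e(2) ab \<open>a \<noteq> v'\<close> \<open>b \<noteq> v'\<close> by auto
      thus ?thesis using \<open>e \<in> E\<close> unfolding Gv_edges_def by blast
    qed
  next
    case 2
    hence "e' = {v', v}" using e(2) by auto
    thus ?thesis unfolding Gv_edges_def by blast
  next
    case (3 u)
    have "u \<noteq> v" using 3 g unfolding graph_def by (auto simp: doubleton_eq_iff)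
    moreover have "u \<noteq> v'" using 3 v' by blast
    ultimately have "e' = {v, u}" using e(2) 3 by auto
    thus ?thesis using 3 unfolding Gv_edges_def by blast
  qed
qed

lemma transpose_Gv_edges: "map_edges (transpose v v') (Gv_edges V E v v') = Gv_edges V E v v'"
proof
  show "map_edges (transpose v v') (Gv_edges V E v v') \<subseteq> Gv_edges V E v v'"
    by (rule transpose_Gv_edges_subset)
  have "map_edges (transpose v v') (map_edges (transpose v v') (Gv_edges V E v v'))
      \<subseteq> map_edges (transpose v v') (Gv_edges V E v v')"
    using transpose_Gv_edges_subset by (rule image_mono)
  thus "Gv_edges V E v v' \<subseteq> map_edges (transpose v v') (Gv_edges V E v v')"
    by (simp add: image_comp)
qed

lemma search_tree_Gv_transpose:
  assumes "search_tree (insert v' V) (Gv_edges V E v v') X"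
  shows "search_tree (insert v' V) (Gv_edges V E v v') (relabel (transpose v v') X)"
proof -
  have "search_tree (transpose v v' ` insert v' V) (map_edges (transpose v v') (Gv_edges V E v v'))
      (relabel (transpose v v') X)"
    using search_tree_relabel[OF assms inj_transpose] .
  moreover have "transpose v v' ` insert v' V = insert v' V"
    using v by (intro transpose_image_eq) simp
  ultimately show ?thesis by (simp add: transpose_Gv_edges)
qed

end

section \<open>Insertion below the root\<close>

text \<open>\<open>graft r (prune F r S) Y\<close> replaces the branch \<open>S\<close> of the tree \<open>(r, F)\<close> by \<open>Y\<close>.\<close>

definition graft :: "'a \<Rightarrow> 'a set set \<Rightarrow> 'a rtree \<Rightarrow> 'a rtree" where
  "graft r R Y = (r, R \<union> hang_edges r Y)"

definition prune :: "'a set set \<Rightarrow> 'a \<Rightarrow> 'a rtree \<Rightarrow> 'a set set" where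
  "prune F r S = F - hang_edges r S"

lemma fst_graft [simp]: "fst (graft r R Y) = r"
  by (simp add: graft_def)

lemma ins_0: "ins T 0 x v = (x, hang_edges x T)"
  by (simp add: ins_def)

lemma fst_ins_0 [simp]: "fst (ins T 0 x v) = x"
  by (simp add: ins_0)

lemma depth_root: "depth (r, F) r = 0"
  by (simp add: depth_def root_path_root)

context
  fixes V E r F t C0
  assumes dc: "decomp V E r F t" and C0: "C0 \<in> comps_del V E r"
begin

lemma depth_child: "v \<in> C0 \<Longrightarrow> depth (r, F) v = Suc (depth (t C0) v)"
  using root_path_child[OF dc C0] root_path_mem_root_paths[OF decomp_search_tree[OF dc C0]]
  by (fastforce simp: depth_def root_paths_def tree_path_def)

lemma ins_Suc_graft:
  assumes v: "v \<in> C0" and i: "i \<le> depth (t C0) v"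
  shows "ins (r, F) (Suc i) x v = graft r (prune F r (t C0)) (ins (t C0) i x v)"
proof -
  define S where "S = t C0"
  define p where "p = root_path S v"
  have "p \<in> root_paths S v"
    using root_path_mem_root_paths[OF decomp_search_tree[OF dc C0] v] by (simp add: S_def p_def)
  hence path: "tree_path (snd S) p" "hd p = fst S" by (auto simp: root_paths_def)
  hence "p \<noteq> []" by (simp add: tree_path_def)
  moreover have "depth (t C0) v = length p - 1" by (simp add: depth_def S_def p_def)
  ultimately have "i < length p" using i by (cases p) auto
  have rp: "root_path (r, F) v = r # p" using root_path_child[OF dc C0 v] by (simp add: S_def p_def)
  have sub: "hang_edges r S \<subseteq> F" using decomp_hang_edges_subset[OF dc C0] by (simp add: S_def)
  have "r \<notin> C0" using comps_subset[OF C0] by blast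
  hence nS: "{r, fst S} \<notin> snd S" using decomp_edge_subset[OF dc C0] by (auto simp: S_def)
  show ?thesis
  proof (cases i)
    case 0
    have "p ! 0 = fst S" using path \<open>p \<noteq> []\<close> by (simp add: hd_conv_nth)
    hence "ins (r, F) (Suc i) x v = (r, (F - {{r, fst S}}) \<union> {{r, x}, {x, fst S}})"
      using 0 by (simp add: ins_def rp)
    moreover have "ins S i x v = (x, hang_edges x S)" using 0 by (simp add: ins_0)
    moreover have "(F - {{r, fst S}}) \<union> {{r, x}, {x, fst S}} =
        prune F r S \<union> hang_edges r (x, hang_edges x S)"
      using sub nS unfolding prune_def by auto
    ultimately show ?thesis by (simp add: graft_def S_def)
  next
    case (Suc k)
    define N where "N = {{p ! k, x}, {x, p ! Suc k}}"
    have e: "{p ! k, p ! Suc k} \<in> snd S"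
      using path(1) \<open>i < length p\<close> Suc by (simp add: tree_path_def)
    have "ins (r, F) (Suc i) x v = (r, (F - {{p ! k, p ! Suc k}}) \<union> N)"
      using Suc by (simp add: ins_def rp N_def)
    moreover have "ins S i x v = (fst S, (snd S - {{p ! k, p ! Suc k}}) \<union> N)"
      using Suc by (simp add: ins_def p_def N_def Let_def)
    moreover have "(F - {{p ! k, p ! Suc k}}) \<union> N =
        prune F r S \<union> hang_edges r (fst S, (snd S - {{p ! k, p ! Suc k}}) \<union> N)"
      using sub nS e unfolding prune_def by auto
    ultimately show ?thesis by (simp add: graft_def S_def)
  qed
qed

lemma prune_disjoint:
  assumes e: "e \<in> prune F r (t C0)"
  shows "e \<inter> C0 = {}" and "e \<subseteq> V"
proof -
  obtain C where C: "C \<in> comps_del V E r" and eC: "e \<in> hang_edges r (t C)" and "C \<noteq> C0"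
    using e dc unfolding prune_def decomp_def by blast
  hence "C \<inter> C0 = {}" using comps_eqI[OF C C0] by blast
  moreover have "e \<subseteq> insert r C"
    using eC decomp_root_mem[OF dc C] decomp_edge_subset[OF dc C] by blast
  moreover have "r \<in> V" "r \<notin> C0" "C \<subseteq> V" using dc comps_subset[OF C0] comps_subset[OF C]
    unfolding decomp_def by auto
  ultimately show "e \<inter> C0 = {}" and "e \<subseteq> V" by auto
qed

lemma decomp_eq_graft_prune: "(r, F) = graft r (prune F r (t C0)) (t C0)"
  using decomp_hang_edges_subset[OF dc C0] by (auto simp: graft_def prune_def)

lemma prune_eq: "prune F r (t C0) = (\<Union>C\<in>comps_del V E r - {C0}. hang_edges r (t C))"
proof -
  have "e \<notin> hang_edges r (t C0)"
    if C: "C \<in> comps_del V E r" "C \<noteq> C0" and e: "e \<in> hang_edges r (t C)" for C e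
  proof
    assume e0: "e \<in> hang_edges r (t C0)"
    obtain x where x: "x \<in> e" "x \<in> C"
      using e decomp_root_mem[OF dc C(1)] decomp_edge_subset[OF dc C(1)]
        rtree_on_edge_nonempty[OF decomp_rtree_on[OF dc C(1)]] by blast
    have "e \<subseteq> insert r C0" using e0 decomp_root_mem[OF dc C0] decomp_edge_subset[OF dc C0] by blast
    moreover have "x \<noteq> r" using x comps_subset[OF C(1)] by blast
    ultimately have "x \<in> C0" using x by blast
    thus False using comps_eqI[OF C(1) C0 x(2)] C(2) by blast
  qed
  moreover have "F = (\<Union>C\<in>comps_del V E r. hang_edges r (t C))"
    using dc unfolding decomp_def by blast
  ultimately show ?thesis unfolding prune_def by blast
qed

end

lemma relabel_graft:
  assumes "r \<notin> {a, b}" and "\<And>e. e \<in> R \<Longrightarrow> a \<notin> e \<and> b \<notin> e"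
  shows "relabel (transpose a b) (graft r R Y) = graft r R (relabel (transpose a b) Y)"
proof -
  have "transpose a b ` e = e" if "e \<in> R" for e
    using assms(2)[OF that] by (intro transpose_image_eq) simp
  hence "map_edges (transpose a b) R = R" by force
  thus ?thesis using assms(1) by (simp add: relabel_def graft_def image_Un)
qed

lemma Pset_eq_image:
  "Pset T v v' = (\<lambda>i. ins T i v' v) ` {..depth T v} \<union>
    (\<lambda>i. relabel (transpose v v') (ins T i v' v)) ` {..depth T v}"
  by (auto simp: Pset_def)

lemma Pset_root:
  "Pset (v, F) v v' = {ins (v, F) 0 v' v, relabel (transpose v v') (ins (v, F) 0 v' v)}"
  unfolding Pset_eq_image depth_root by auto

lemma Pset_child:
  assumes dc: "decomp V E r F t" and C0: "C0 \<in> comps_del V E r" and v: "v \<in> C0" and v': "v' \<notin> V"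
  shows "Pset (r, F) v v' = {ins (r, F) 0 v' v, relabel (transpose v v') (ins (r, F) 0 v' v)} \<union>
    graft r (prune F r (t C0)) ` Pset (t C0) v v'"
proof -
  let ?g = "graft r (prune F r (t C0))"
  let ?\<rho> = "relabel (transpose v v')"
  let ?n = "depth (t C0) v"
  have "r \<in> V" using dc by (simp add: decomp_def)
  hence "r \<notin> {v, v'}" using comps_subset[OF C0] v v' by blast
  moreover have "\<And>e. e \<in> prune F r (t C0) \<Longrightarrow> v \<notin> e \<and> v' \<notin> e"
    using prune_disjoint[OF dc C0] v v' by blast
  ultimately have swap: "?\<rho> (?g Y) = ?g (?\<rho> Y)" for Y by (rule relabel_graft)
  have "(\<lambda>i. ins (r, F) i v' v) ` Suc ` {..?n} = ?g ` (\<lambda>i. ins (t C0) i v' v) ` {..?n}"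
    by (auto simp: ins_Suc_graft[OF dc C0 v] image_image)
  moreover have "(\<lambda>i. ?\<rho> (ins (r, F) i v' v)) ` Suc ` {..?n} =
      ?g ` (\<lambda>i. ?\<rho> (ins (t C0) i v' v)) ` {..?n}"
    by (auto simp: ins_Suc_graft[OF dc C0 v] image_image swap)
  ultimately show ?thesis
    unfolding Pset_eq_image depth_child[OF dc C0 v] atMost_Suc_eq_insert_0 image_insert image_Un
    by blast
qed

section \<open>Search trees on \<open>G\<^sub>v\<close>\<close>

context
  fixes V E v v'
  assumes g: "graph V E" and v: "v \<in> V" and v': "v' \<notin> V"
begin

lemma comps_del_Gv_edges:
  assumes r: "r \<in> V" "r \<noteq> v" and C0: "C0 \<in> comps_del V E r" "v \<in> C0"
  shows "comps_del (insert v' V) (Gv_edges V E v v') r =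
    insert (insert v' C0) (comps_del V E r - {C0})"
proof -
  have W: "insert v' V - {r} = insert v' (V - {r})" using r v' by blast
  have vW: "v \<in> V - {r}" using v r by blast
  have "induced (Gv_edges V E v v') (insert v' (V - {r})) =
      Gv_edges (V - {r}) (induced E (V - {r})) v v'"
    using induced_Gv_edges_insert[OF g _ vW v'] by blast
  moreover have "C0 = component (V - {r}) (induced E (V - {r})) v" using comps_eq_component[OF C0] .
  moreover have "graph (V - {r}) (induced E (V - {r}))" using graph_induced[OF g] by blast
  ultimately show ?thesis unfolding W using comps_Gv_edges[OF _ vW] v' by simp
qed

lemma search_tree_Gv_new_root_iff:
  "search_tree (insert v' V) (Gv_edges V E v v') (v', F') \<longleftrightarrow>
    (\<exists>T. search_tree V E T \<and> F' = hang_edges v' T)"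
proof -
  have W: "insert v' V - {v'} = V" using v' by blast
  have K: "comps_del (insert v' V) (Gv_edges V E v v') v' = {V}" if "connected_graph V E"
    unfolding W induced_Gv_edges_self[OF g v'] using comps_connected[OF that] .
  show ?thesis
  proof
    assume "search_tree (insert v' V) (Gv_edges V E v v') (v', F')"
    then obtain t' where dc: "decomp (insert v' V) (Gv_edges V E v v') v' F' t'"
      by (auto simp: search_tree_iff_decomp)
    hence "connected_graph V E"
      using connected_graph_Gv_edges_iff[OF g v v'] by (simp add: decomp_def)
    hence "search_tree V E (t' V) \<and> F' = hang_edges v' (t' V)"
      using dc K induced_Gv_edges_self[OF g v'] by (simp add: decomp_def)
    thus "\<exists>T. search_tree V E T \<and> F' = hang_edges v' T" by blast
  next
    assume "\<exists>T. search_tree V E T \<and> F' = hang_edges v' T"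
    then obtain T where T: "search_tree V E T" and F': "F' = hang_edges v' T" by blast
    have conn: "connected_graph V E" using search_tree_connected[OF T] .
    show "search_tree (insert v' V) (Gv_edges V E v v') (v', F')"
    proof (rule search_tree.st[where t = "\<lambda>_. T"])
      show "connected_graph (insert v' V) (Gv_edges V E v v')"
        using connected_graph_Gv_edges_iff[OF g v v'] conn by simp
    qed (use T F' K[OF conn] induced_Gv_edges_self[OF g v'] in simp_all)
  qed
qed

lemma search_tree_Gv_graft:
  assumes dc: "decomp V E r F t" and C0: "C0 \<in> comps_del V E r" "v \<in> C0"
    and Y: "search_tree (insert v' C0) (Gv_edges C0 (induced E C0) v v') Y"
  shows "search_tree (insert v' V) (Gv_edges V E v v') (graft r (prune F r (t C0)) Y)"
proof -
  let ?K = "comps_del V E r"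
  let ?K' = "comps_del (insert v' V) (Gv_edges V E v v') r"
  have C0V: "C0 \<subseteq> V - {r}" using comps_subset[OF C0(1)] .
  have r: "r \<in> V" "r \<noteq> v" and conn: "connected_graph V E"
    using dc C0V C0(2) unfolding decomp_def by auto
  have K': "?K' = insert (insert v' C0) (?K - {C0})" using comps_del_Gv_edges[OF r C0] .
  have new: "insert v' C0 \<notin> ?K"
  proof
    assume "insert v' C0 \<in> ?K"
    thus False using comps_subset[of "insert v' C0"] v' by blast
  qed
  define t' where "t' C = (if C = insert v' C0 then Y else t C)" for C
  have t'_old: "t' C = t C" if "C \<in> ?K" for C using that new by (auto simp: t'_def)
  show ?thesis unfolding graft_def
  proof (rule search_tree.st[where t = t'])
    show "connected_graph (insert v' V) (Gv_edges V E v v')"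
      using connected_graph_Gv_edges_iff[OF g v v'] conn by simp
    show "r \<in> insert v' V" using r by simp
    show "\<forall>C\<in>?K'. search_tree C (induced (Gv_edges V E v v') C) (t' C)"
    proof
      fix C assume "C \<in> ?K'"
      hence "C = insert v' C0 \<or> C \<in> ?K - {C0}" using K' by blast
      thus "search_tree C (induced (Gv_edges V E v v') C) (t' C)"
      proof
        assume C: "C = insert v' C0"
        have "induced (Gv_edges V E v v') C = Gv_edges C0 (induced E C0) v v'"
          using C induced_Gv_edges_insert[OF g _ C0(2) v'] C0V by blast
        thus ?thesis using C Y by (simp add: t'_def)
      next
        assume C: "C \<in> ?K - {C0}"
        hence "v' \<notin> C" using comps_subset[of C] v' by blast
        hence "induced (Gv_edges V E v v') C = induced E C" by (rule induced_Gv_edges_avoiding)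
        thus ?thesis using decomp_search_tree[OF dc] C t'_old by simp
      qed
    qed
    have "(\<Union>C\<in>?K - {C0}. hang_edges r (t' C)) = prune F r (t C0)"
      unfolding prune_eq[OF dc C0(1)] using t'_old by simp
    moreover have "t' (insert v' C0) = Y" by (simp add: t'_def)
    ultimately show "prune F r (t C0) \<union> hang_edges r Y = (\<Union>C\<in>?K'. hang_edges r (t' C))"
      unfolding K' UN_insert by (simp add: Un_commute)
  qed
qed

context
  fixes r F' t' C0
  assumes dc': "decomp (insert v' V) (Gv_edges V E v v') r F' t'" and r: "r \<in> V" "r \<noteq> v"
    and C0: "C0 \<in> comps_del V E r" "v \<in> C0"
begin

lemma decomp_Gv_branch:
  "search_tree (insert v' C0) (Gv_edges C0 (induced E C0) v v') (t' (insert v' C0))"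
proof -
  have "induced (Gv_edges V E v v') (insert v' C0) = Gv_edges C0 (induced E C0) v v'"
    using induced_Gv_edges_insert[OF g _ C0(2) v'] comps_subset[OF C0(1)] by blast
  moreover have "insert v' C0 \<in> comps_del (insert v' V) (Gv_edges V E v v') r"
    by (simp add: comps_del_Gv_edges[OF r C0])
  ultimately show ?thesis using decomp_search_tree[OF dc'] by metis
qed

lemma decomp_Gv_eq_graft:
  assumes S: "search_tree C0 (induced E C0) S"
  obtains F t where "decomp V E r F t" and "t C0 = S"
    and "(r, F') = graft r (prune F r S) (t' (insert v' C0))"
proof -
  let ?K = "comps_del V E r"
  define t where "t C = (if C = C0 then S else t' C)" for C
  define F where "F = (\<Union>C\<in>?K. hang_edges r (t C))"
  have "search_tree C (induced E C) (t C)" if C: "C \<in> ?K" for C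
  proof (cases "C = C0")
    case False
    hence "C \<in> comps_del (insert v' V) (Gv_edges V E v v') r"
      using C by (simp add: comps_del_Gv_edges[OF r C0])
    hence "search_tree C (induced (Gv_edges V E v v') C) (t' C)"
      by (rule decomp_search_tree[OF dc'])
    moreover have "v' \<notin> C" using comps_subset[OF C] v' by blast
    ultimately show ?thesis
      using False induced_Gv_edges_avoiding[of v' C V E v] by (simp add: t_def)
  qed (simp add: S t_def)
  moreover have "connected_graph V E"
    using dc' connected_graph_Gv_edges_iff[OF g v v'] by (simp add: decomp_def)
  ultimately have dc: "decomp V E r F t" unfolding decomp_def F_def using r(1) by blast
  have tC0: "t C0 = S" by (simp add: t_def)
  have "prune F r S = (\<Union>C\<in>?K - {C0}. hang_edges r (t' C))"
    using prune_eq[OF dc C0(1)] by (simp add: tC0 t_def)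
  moreover have "F' = (\<Union>C\<in>comps_del (insert v' V) (Gv_edges V E v v') r. hang_edges r (t' C))"
    using dc' by (simp add: decomp_def)
  ultimately have "F' = prune F r S \<union> hang_edges r (t' (insert v' C0))"
    unfolding comps_del_Gv_edges[OF r C0] UN_insert by (simp add: Un_commute)
  hence "(r, F') = graft r (prune F r S) (t' (insert v' C0))" by (simp add: graft_def)
  thus thesis using that dc tC0 by blast
qed

end

end

lemma mem_Pset_search_tree:
  "search_tree V E T \<Longrightarrow> graph V E \<Longrightarrow> v \<in> V \<Longrightarrow> v' \<notin> V \<Longrightarrow> X \<in> Pset T v v' \<Longrightarrow>
    search_tree (insert v' V) (Gv_edges V E v v') X"
proof (induction arbitrary: v X rule: search_tree.induct)
  case (st V E r t F)
  note g = st.prems(1) and v = st.prems(2) and v' = st.prems(3) and X = st.prems(4)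
  have "\<forall>C\<in>comps_del V E r. search_tree C (induced E C) (t C)" using st.IH by blast
  hence dc: "decomp V E r F t" unfolding decomp_def by (intro conjI st.hyps)
  hence "search_tree V E (r, F)" unfolding search_tree_iff_decomp by blast
  hence ins0: "search_tree (insert v' V) (Gv_edges V E v v') (ins (r, F) 0 v' v)"
    unfolding ins_0 using search_tree_Gv_new_root_iff[OF g v v'] by blast
  have ins0': "search_tree (insert v' V) (Gv_edges V E v v')
      (relabel (transpose v v') (ins (r, F) 0 v' v))"
    using search_tree_Gv_transpose[OF g v v' ins0] .
  show ?case
  proof (cases "r = v")
    case True
    thus ?thesis using X ins0 ins0' by (auto simp: Pset_root)
  next
    case False
    then obtain C0 where C0: "C0 \<in> comps_del V E r" "v \<in> C0"
      using ex_comps_mem[of v "V - {r}" "induced E (V - {r})"] v by blast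
    have "v' \<notin> C0" using comps_subset[OF C0(1)] v' by blast
    have "search_tree (insert v' V) (Gv_edges V E v v') (graft r (prune F r (t C0)) Y)"
      if Y: "Y \<in> Pset (t C0) v v'" for Y
    proof -
      have "search_tree (insert v' C0) (Gv_edges C0 (induced E C0) v v') Y"
        using st.IH C0 graph_comps_del[OF g C0(1)] \<open>v' \<notin> C0\<close> Y by blast
      thus ?thesis using search_tree_Gv_graft[OF g v v' dc C0] by blast
    qed
    thus ?thesis using X ins0 ins0' by (auto simp: Pset_child[OF dc C0 v'])
  qed
qed

lemma search_tree_Gv_mem_Pset:
  "graph V E \<Longrightarrow> v \<in> V \<Longrightarrow> v' \<notin> V \<Longrightarrow> search_tree (insert v' V) (Gv_edges V E v v') X \<Longrightarrow>
    \<exists>T. search_tree V E T \<and> X \<in> Pset T v v'"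
proof (induction "card V" arbitrary: V E v X rule: less_induct)
  case less
  note g = less.prems(1) and v = less.prems(2) and v' = less.prems(3) and X = less.prems(4)
  obtain r F' where rF': "X = (r, F')" by (cases X)
  then obtain t' where dc': "decomp (insert v' V) (Gv_edges V E v v') r F' t'"
    using X search_tree_iff_decomp by metis
  have Pset_0: "ins T 0 v' v \<in> Pset T v v'" "relabel (transpose v v') (ins T 0 v' v) \<in> Pset T v v'"
    for T by (auto simp: Pset_def)
  consider "r = v'" | "r = v" | "r \<in> V" "r \<noteq> v" using dc' by (auto simp: decomp_def)
  thus ?case
  proof cases
    case 1
    then obtain T where "search_tree V E T" "X = ins T 0 v' v"
      using X rF' search_tree_Gv_new_root_iff[OF g v v'] by (auto simp: ins_0)
    thus ?thesis using Pset_0 by blast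
  next
    case 2
    have "relabel (transpose v v') X = (v', snd (relabel (transpose v v') X))"
      using rF' 2 by (simp add: relabel_def)
    then obtain T where T: "search_tree V E T" "relabel (transpose v v') X = ins T 0 v' v"
      using search_tree_Gv_transpose[OF g v v' X] search_tree_Gv_new_root_iff[OF g v v']
      by (metis ins_0)
    hence "X = relabel (transpose v v') (ins T 0 v' v)" by (metis relabel_transpose_transpose)
    thus ?thesis using T(1) Pset_0 by blast
  next
    case 3
    obtain C0 where C0: "C0 \<in> comps_del V E r" "v \<in> C0"
      using ex_comps_mem[of v "V - {r}" "induced E (V - {r})"] v 3 by blast
    have "finite V" using g by (simp add: graph_def)
    hence "card C0 < card V" using card_comps_del_less 3(1) C0(1) by metis
    moreover have "v' \<notin> C0" using comps_subset[OF C0(1)] v' by blast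
    ultimately obtain S where S: "search_tree C0 (induced E C0) S" "t' (insert v' C0) \<in> Pset S v v'"
      using less.hyps[OF _ graph_comps_del[OF g C0(1)] C0(2) _ decomp_Gv_branch[OF g v v' dc' 3 C0]]
      by blast
    obtain F t where dc: "decomp V E r F t" "t C0 = S"
      and X_eq: "(r, F') = graft r (prune F r S) (t' (insert v' C0))"
      using decomp_Gv_eq_graft[OF g v v' dc' 3 C0 S(1)] .
    have "X \<in> Pset (r, F) v v'" using Pset_child[OF dc(1) C0 v'] S(2) dc(2) X_eq rF' by auto
    moreover have "search_tree V E (r, F)" unfolding search_tree_iff_decomp using dc(1) by blast
    ultimately show ?thesis by blast
  qed
qed

lemma hang_edges_inj:
  assumes eq: "hang_edges x S1 = hang_edges x S2" and S: "rtree_on A S1" "rtree_on A S2"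
    and x: "x \<notin> A"
  shows "S1 = S2"
proof -
  have notin: "{x, y} \<notin> snd S" if "rtree_on A S" for S y
    using rtree_on_edge_subset[OF that] x by blast
  have "{x, fst S1} \<in> hang_edges x S2" using eq by blast
  hence "{x, fst S1} = {x, fst S2}" using notin[OF S(2)] by blast
  hence fst_eq: "fst S1 = fst S2" by (auto simp: doubleton_eq_iff)
  have "snd S = hang_edges x S - {{x, fst S}}" if "rtree_on A S" for S
    using notin[OF that] by simp
  hence "snd S1 = snd S2" using S eq fst_eq by metis
  with fst_eq show ?thesis by (simp add: prod_eq_iff)
qed

lemma ins_0_inj:
  assumes "ins T1 0 x v = ins T2 0 x v" and "rtree_on A T1" "rtree_on A T2" and "x \<notin> A"
  shows "T1 = T2"
proof -
  have "hang_edges x T1 = hang_edges x T2" using assms(1) by (simp add: ins_0)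
  from this assms(2-4) show ?thesis by (rule hang_edges_inj)
qed

lemma graft_inj:
  assumes eq: "graft r R1 Y1 = graft r R2 Y2" and Y: "rtree_on A Y1" "rtree_on A Y2"
    and r: "r \<notin> A" and R: "\<forall>e\<in>R1. e \<inter> A = {}" "\<forall>e\<in>R2. e \<inter> A = {}"
  shows "R1 = R2" and "Y1 = Y2"
proof -
  have meets: "e \<inter> A \<noteq> {}" if "rtree_on A Y" "e \<in> hang_edges r Y" for Y e
  proof (cases "e \<in> snd Y")
    case True
    thus ?thesis using rtree_on_edge_subset[OF that(1)] rtree_on_edge_nonempty[OF that(1)] by blast
  next
    case False
    thus ?thesis using that by (auto simp: rtree_on_def)
  qed
  have edges: "R1 \<union> hang_edges r Y1 = R2 \<union> hang_edges r Y2" using eq by (simp add: graft_def)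
  let ?edges = "R1 \<union> hang_edges r Y1"
  have R1: "R1 = {e \<in> ?edges. e \<inter> A = {}}" using R(1) meets[OF Y(1)] by blast
  have R2: "R2 = {e \<in> ?edges. e \<inter> A = {}}" unfolding edges using R(2) meets[OF Y(2)] by blast
  show "R1 = R2" using trans[OF R1 R2[symmetric]] .
  have H1: "hang_edges r Y1 = {e \<in> ?edges. e \<inter> A \<noteq> {}}" using R(1) meets[OF Y(1)] by blast
  have H2: "hang_edges r Y2 = {e \<in> ?edges. e \<inter> A \<noteq> {}}"
    unfolding edges using R(2) meets[OF Y(2)] by blast
  show "Y1 = Y2" using hang_edges_inj[OF trans[OF H1 H2[symmetric]] Y r] .
qed

lemma graft_prune_inj:
  assumes g: "graph V E" and v': "v' \<notin> V"
    and dc1: "decomp V E r F1 t1" and dc2: "decomp V E r F2 t2"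
    and C0: "C0 \<in> comps_del V E r" "v \<in> C0"
    and Y1: "Y1 \<in> Pset (t1 C0) v v'" and Y2: "Y2 \<in> Pset (t2 C0) v v'"
    and eq: "graft r (prune F1 r (t1 C0)) Y1 = graft r (prune F2 r (t2 C0)) Y2"
  shows "prune F1 r (t1 C0) = prune F2 r (t2 C0)" and "Y1 = Y2"
proof -
  have v'C: "v' \<notin> C0" using comps_subset[OF C0(1)] v' by blast
  have on: "rtree_on (insert v' C0) Y" if dc: "decomp V E r F t" and Y: "Y \<in> Pset (t C0) v v'"
    for F t Y
    using search_tree_rtree_on[OF mem_Pset_search_tree[OF decomp_search_tree[OF dc C0(1)]
        graph_comps_del[OF g C0(1)] C0(2) v'C Y]] .
  have pruned: "\<forall>e\<in>prune F r (t C0). e \<inter> insert v' C0 = {}" if "decomp V E r F t" for F t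
  proof
    fix e assume "e \<in> prune F r (t C0)"
    thus "e \<inter> insert v' C0 = {}" using prune_disjoint[OF that C0(1)] v' by blast
  qed
  have "r \<in> V" using dc1 by (simp add: decomp_def)
  hence "r \<notin> insert v' C0" using comps_subset[OF C0(1)] v' by blast
  from graft_inj[OF eq on[OF dc1 Y1] on[OF dc2 Y2] this pruned[OF dc1] pruned[OF dc2]]
  show "prune F1 r (t1 C0) = prune F2 r (t2 C0)" and "Y1 = Y2" .
qed

lemma Pset_decomp_cases:
  assumes dc: "decomp V E r F t" and v: "v \<in> V" and v': "v' \<notin> V" and X: "X \<in> Pset (r, F) v v'"
  shows "fst X = v' \<Longrightarrow> X = ins (r, F) 0 v' v"
    and "fst X = v \<Longrightarrow> X = relabel (transpose v v') (ins (r, F) 0 v' v)"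
    and "fst X \<notin> {v, v'} \<Longrightarrow> fst X = r \<and> (\<exists>C0\<in>comps_del V E r. v \<in> C0 \<and>
          (\<exists>Y\<in>Pset (t C0) v v'. X = graft r (prune F r (t C0)) Y))"
proof -
  let ?A = "ins (r, F) 0 v' v"
  let ?B = "relabel (transpose v v') (ins (r, F) 0 v' v)"
  let ?branch = "\<exists>C0\<in>comps_del V E r. v \<in> C0 \<and>
    (\<exists>Y\<in>Pset (t C0) v v'. X = graft r (prune F r (t C0)) Y)"
  have "r \<in> V" using dc by (simp add: decomp_def)
  hence distinct: "v \<noteq> v'" "r \<noteq> v'" using v v' by auto
  have fst_B: "fst ?B = v" by (simp add: relabel_def)
  have branch: ?branch if "X \<noteq> ?A" "X \<noteq> ?B"
  proof (cases "r = v")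
    case True
    thus ?thesis using X that by (simp add: Pset_root)
  next
    case False
    then obtain C0 where C0: "C0 \<in> comps_del V E r" "v \<in> C0"
      using ex_comps_mem[of v "V - {r}" "induced E (V - {r})"] v by blast
    hence "X \<in> graft r (prune F r (t C0)) ` Pset (t C0) v v'"
      using X that by (simp add: Pset_child[OF dc C0 v'])
    thus ?thesis using C0 by blast
  qed
  show "X = ?A" if "fst X = v'"
  proof (rule ccontr)
    assume "X \<noteq> ?A"
    moreover have "X \<noteq> ?B" using that fst_B distinct by auto
    ultimately show False using branch that distinct by auto
  qed
  show "X = ?B" if "fst X = v"
  proof (rule ccontr)
    assume "X \<noteq> ?B"
    moreover have "X \<noteq> ?A" using that distinct fst_ins_0 by metis
    ultimately obtain C0 where "C0 \<in> comps_del V E r" "v \<in> C0" "fst X = r" using branch by auto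
    thus False using that comps_subset by blast
  qed
  show "fst X = r \<and> ?branch" if "fst X \<notin> {v, v'}"
  proof -
    have "X \<noteq> ?A" "X \<noteq> ?B" using that fst_B by auto
    thus ?thesis using branch by auto
  qed
qed

lemma mem_Pset_unique:
  "graph V E \<Longrightarrow> v \<in> V \<Longrightarrow> v' \<notin> V \<Longrightarrow> search_tree V E T1 \<Longrightarrow> search_tree V E T2 \<Longrightarrow>
    X \<in> Pset T1 v v' \<Longrightarrow> X \<in> Pset T2 v v' \<Longrightarrow> T1 = T2"
proof (induction "card V" arbitrary: V E v T1 T2 X rule: less_induct)
  case less
  note g = less.prems(1) and v = less.prems(2) and v' = less.prems(3)
  obtain r1 F1 t1 where T1: "T1 = (r1, F1)" and dc1: "decomp V E r1 F1 t1"
    using less.prems(4) by (cases T1) (auto simp: search_tree_iff_decomp)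
  obtain r2 F2 t2 where T2: "T2 = (r2, F2)" and dc2: "decomp V E r2 F2 t2"
    using less.prems(5) by (cases T2) (auto simp: search_tree_iff_decomp)
  note cases1 = Pset_decomp_cases[OF dc1 v v' less.prems(6)[unfolded T1]]
  note cases2 = Pset_decomp_cases[OF dc2 v v' less.prems(7)[unfolded T2]]
  have ins0_inj: "T1 = T2" if "ins T1 0 v' v = ins T2 0 v' v"
    using ins_0_inj[OF that search_tree_rtree_on[OF less.prems(4)]
        search_tree_rtree_on[OF less.prems(5)] v'] .
  consider "fst X = v'" | "fst X = v" | "fst X \<notin> {v, v'}" by blast
  then show ?case
  proof cases
    case 1
    thus ?thesis using cases1(1) cases2(1) ins0_inj T1 T2 by simp
  next
    case 2
    hence "relabel (transpose v v') (ins T1 0 v' v) = relabel (transpose v v') (ins T2 0 v' v)"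
      using cases1(2) cases2(2) T1 T2 by simp
    thus ?thesis using ins0_inj by (metis relabel_transpose_transpose)
  next
    case 3
    define r where "r = fst X"
    have r1: "r1 = r" and r2: "r2 = r" using cases1(3)[OF 3] cases2(3)[OF 3] r_def by simp_all
    obtain C0 Y1 where C0: "C0 \<in> comps_del V E r" "v \<in> C0" and Y1: "Y1 \<in> Pset (t1 C0) v v'"
      and X1: "X = graft r (prune F1 r (t1 C0)) Y1"
      using cases1(3)[OF 3] r1 by blast
    obtain C2 Y2 where C2: "C2 \<in> comps_del V E r" "v \<in> C2" and Y2: "Y2 \<in> Pset (t2 C2) v v'"
      and X2: "X = graft r (prune F2 r (t2 C2)) Y2"
      using cases2(3)[OF 3] r2 by blast
    have "C2 = C0" using comps_eqI[OF C2(1) C0(1) C2(2) C0(2)] .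
    note dc1 = dc1[unfolded r1] and dc2 = dc2[unfolded r2]
    note same = graft_prune_inj[OF g v' dc1 dc2 C0 Y1 Y2[unfolded \<open>C2 = C0\<close>]
        trans[OF X1[symmetric] X2[unfolded \<open>C2 = C0\<close>]]]
    have "finite V" and "r \<in> V" using g dc1 by (simp_all add: graph_def decomp_def)
    hence "card C0 < card V" using card_comps_del_less C0(1) by metis
    moreover have "v' \<notin> C0" using comps_subset[OF C0(1)] v' by blast
    ultimately have "t1 C0 = t2 C0"
      using less.hyps[OF _ graph_comps_del[OF g C0(1)] C0(2) _ decomp_search_tree[OF dc1 C0(1)]
          decomp_search_tree[OF dc2 C0(1)] Y1] Y2 same(2) \<open>C2 = C0\<close> by blast
    hence "(r, F1) = (r, F2)"
      using decomp_eq_graft_prune[OF dc1 C0(1)] decomp_eq_graft_prune[OF dc2 C0(1)] same(1) by simp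
    thus ?thesis using T1 T2 r1 r2 by simp
  qed
qed

theorem proposition2p7:
  fixes V :: "'a set" and E :: "'a set set" and v v' :: 'a
  assumes "graph V E" and "connected_graph V E" and "v \<in> V" and "v' \<notin> V"
  shows "partition_on {T. search_tree (insert v' V) (Gv_edges V E v v') T}
           ((\<lambda>T. Pset T v v') ` {T. search_tree V E T})"
proof (rule partition_onI)
  show "\<Union> ((\<lambda>T. Pset T v v') ` {T. search_tree V E T}) =
      {T. search_tree (insert v' V) (Gv_edges V E v v') T}"
    using mem_Pset_search_tree[OF _ assms(1,3,4)] search_tree_Gv_mem_Pset[OF assms(1,3,4)] by blast
  show "disjnt P Q" if "P \<in> (\<lambda>T. Pset T v v') ` {T. search_tree V E T}"
    and "Q \<in> (\<lambda>T. Pset T v v') ` {T. search_tree V E T}" and "P \<noteq> Q" for P Q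
    using that mem_Pset_unique[OF assms(1,3,4)] unfolding disjnt_def by blast
  show "{} \<notin> (\<lambda>T. Pset T v v') ` {T. search_tree V E T}"
    by (auto simp: Pset_def)
qed

end
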